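(* Let $d\ge 1$ and let $(D,\mathbf{m},E)\in\mathbb{R}\times\mathbb{R}^d\times\mathbb{R}$ satisfy $D>0$ and $E-\sqrt{D^2+|\mathbf{m}|^2}>0$ (in particular $E>|\mathbf{m}|$). For $h>1$ define \[ T(h)=\frac{3h-8}{24}+\frac{\sqrt{(3h+8)^2-96}}{24}, \] and for $\Pi\ge E$ define \[ h(\Pi)=\frac{\sqrt{\Pi^2-|\mathbf{m}|^2}}{D},\qquad S(\Pi)=\Pi^2-\Pi E-D^2\,h(\Pi)\,T\big(h(\Pi)\big). \] Then $S$ has exactly one real root in the open interval $(E,\infty)$.
   Context: This arises for the relativistic hydrodynamics equations closed by the equation of state $h=\frac{2(6p^2+4p\rho+\rho^2)}{\rho(3p+2\rho)}$ (RC-EOS), relating specific enthalpy $h$, pressure $p$ and rest-mass density $\rho$; solving this for $p>0$ gives $p=\rho\,T(h)$. Here $D$ is the relativistic density, $\mathbf{m}$ the momentum density, $E$ the energy density, and $\Pi=E+p$. For $\Pi\ge E$ one has $h(\Pi)>1$, so $S$ is well defined there. *)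

theory Defs
  imports "HOL-Analysis.Analysis"
begin

definition rc_T :: "real \<Rightarrow> real" where
  "rc_T h = (3*h - 8)/24 + sqrt ((3*h + 8)^2 - 96) / 24"

definition rc_h :: "real \<Rightarrow> real ^ 'n \<Rightarrow> real \<Rightarrow> real" where
  "rc_h D m P = sqrt (P^2 - (norm m)^2) / D"

definition rc_S :: "real \<Rightarrow> real ^ 'n \<Rightarrow> real \<Rightarrow> real \<Rightarrow> real" where
  "rc_S D m E P = P^2 - P * E - D^2 * rc_h D m P * rc_T (rc_h D m P)"

end

theory Submission
  imports Defs
begin

text \<open>
  Write \<open>S(\<Pi>) = \<Pi>\<^sup>2 - \<Pi> E - D\<^sup>2 \<psi>(h(\<Pi>))\<close> with \<open>\<psi>(h) = h T(h)\<close>. Since \<open>T \<le> h/4\<close> and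
  \<open>T' < 3/4\<close>, we get \<open>\<psi>' < h\<close>; together with \<open>D\<^sup>2 h(\<Pi>)\<^sup>2 = \<Pi>\<^sup>2 - |m|\<^sup>2\<close> this says that
  \<open>D\<^sup>2 \<psi>(h(\<Pi>))\<close> grows by at most half as much as \<open>\<Pi>\<^sup>2\<close>. Hence \<open>S\<close> grows at least as fast as
  \<open>\<Pi>\<^sup>2/2 - \<Pi> E\<close>, which is strictly increasing on \<open>[E, \<infinity>)\<close>. As \<open>S(E) = -D\<^sup>2 \<psi>(h(E)) < 0\<close>
  and \<open>S(2E) \<ge> E\<^sup>2 > 0\<close>, the intermediate value theorem yields exactly one root.
\<close>

lemma sqrt_less_imp_less_power2:
  fixes x y :: real
  assumes "sqrt x < y" "0 \<le> x"
  shows "0 < y" "x < y^2"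
proof -
  show "0 < y" using assms real_sqrt_ge_zero[of x] by linarith
  then have "sqrt x < sqrt (y^2)" using assms by simp
  then show "x < y^2" by (simp only: real_sqrt_less_iff)
qed

lemma rc_T_has_real_derivative:
  assumes "2/3 < h"
  shows "(rc_T has_real_derivative (1 + (3*h + 8) / sqrt ((3*h + 8)^2 - 96)) / 8) (at h)"
proof -
  have "10 < 3*h + 8" using assms by simp
  then have "10^2 < (3*h + 8)^2" by (intro power_strict_mono) auto
  then have radicand: "0 < (3*h + 8)^2 - 96" by simp
  have "(rc_T has_real_derivative
      3/24 + inverse (sqrt ((3*h + 8)^2 - 96)) / 2 * (2 * (3*h + 8) * 3) / 24) (at h)"
    unfolding rc_T_def[abs_def] using radicand by (auto intro!: derivative_eq_intros)
  then show ?thesis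
    by (rule DERIV_cong) (use radicand in \<open>simp add: field_simps\<close>)
qed

lemma rc_T_derivative_less:
  assumes "2/3 < h"
  shows "(1 + (3*h + 8) / sqrt ((3*h + 8)^2 - 96)) / 8 < 3/4"
proof -
  have "10 < 3*h + 8" using assms by simp
  then have square: "10^2 < (3*h + 8)^2" by (intro power_strict_mono) auto
  then have radicand: "0 < (3*h + 8)^2 - 96" by simp
  have "(3*h + 8)^2 < (5 * sqrt ((3*h + 8)^2 - 96))^2"
    using square radicand by (simp add: power_mult_distrib)
  then have "3*h + 8 < 5 * sqrt ((3*h + 8)^2 - 96)"
    by (rule power_less_imp_less_base) (use radicand in simp)
  then have "(3*h + 8) / sqrt ((3*h + 8)^2 - 96) < 5"
    using radicand by (simp add: divide_less_eq)
  then show ?thesis by argo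
qed

lemma rc_T_pos:
  assumes "1 < h"
  shows "0 < rc_T h"
proof -
  have "(8 - 3*h)^2 < (3*h + 8)^2 - 96" using assms by (simp add: power2_eq_square algebra_simps)
  then have "8 - 3*h < sqrt ((3*h + 8)^2 - 96)" by (rule real_less_rsqrt)
  then show ?thesis unfolding rc_T_def by argo
qed

lemma rc_T_le:
  assumes "0 \<le> h"
  shows "rc_T h \<le> h/4"
proof -
  have "sqrt ((3*h + 8)^2 - 96) \<le> sqrt ((3*h + 8)^2)" by (rule real_sqrt_le_mono) simp
  also have "\<dots> = 3*h + 8" using assms by simp
  finally show ?thesis unfolding rc_T_def by argo
qed

lemma mult_rc_T_diff_le:
  assumes "1 < a" "a \<le> b"
  shows "b * rc_T b - a * rc_T a \<le> (b^2 - a^2) / 2"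
proof -
  define T' where "T' h = (1 + (3*h + 8) / sqrt ((3*h + 8)^2 - 96)) / 8" for h :: real
  have "a^2/2 - a * rc_T a \<le> b^2/2 - b * rc_T b"
  proof (rule deriv_nonneg_imp_mono[where g = "\<lambda>h. h^2/2 - h * rc_T h"])
    fix h assume "h \<in> {a..b}"
    then have "1 < h" using assms by simp
    then show "((\<lambda>h. h^2/2 - h * rc_T h) has_real_derivative h - (rc_T h + h * T' h)) (at h)"
      using rc_T_has_real_derivative[of h] unfolding T'_def by (auto intro!: derivative_eq_intros)
    have "rc_T h \<le> h/4" using \<open>1 < h\<close> by (intro rc_T_le) simp
    moreover have "h * T' h \<le> h * (3/4)"
      using \<open>1 < h\<close> rc_T_derivative_less[of h] unfolding T'_def by (intro mult_left_mono) auto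
    ultimately show "0 \<le> h - (rc_T h + h * T' h)" by linarith
  qed (use assms in simp)
  then show ?thesis by simp
qed

lemma rc_h_sq:
  fixes m :: "real ^ 'n"
  assumes "D \<noteq> 0" "(norm m)^2 \<le> P^2"
  shows "D^2 * (rc_h D m P)^2 = P^2 - (norm m)^2"
  using assms by (simp add: rc_h_def power_divide)

lemma rc_h_mono:
  fixes m :: "real ^ 'n"
  assumes "0 < D" "P^2 \<le> Q^2"
  shows "rc_h D m P \<le> rc_h D m Q"
  using assms by (simp add: rc_h_def divide_right_mono)

lemma rc_h_gt_one:
  fixes m :: "real ^ 'n"
  assumes "0 < D" "D^2 + (norm m)^2 < P^2"
  shows "1 < rc_h D m P"
proof -
  have "D < sqrt (P^2 - (norm m)^2)" using assms by (intro real_less_rsqrt) simp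
  then show ?thesis using assms(1) by (simp add: rc_h_def)
qed

lemma strict_mono_on_rc_S:
  fixes m :: "real ^ 'n"
  assumes D: "0 < D" and E: "sqrt (D^2 + (norm m)^2) < E"
  shows "strict_mono_on {E..} (rc_S D m E)"
proof (rule strict_mono_onI)
  fix P Q assume "P \<in> {E..}" "Q \<in> {E..}" "P < Q"
  then have "E \<le> P" by simp
  let ?h = "rc_h D m"
  have "sqrt (D^2 + (norm m)^2) < P" using E \<open>E \<le> P\<close> by linarith
  then have "0 < P" "D^2 + (norm m)^2 < P^2" using sqrt_less_imp_less_power2 by simp_all
  moreover have "P^2 < Q^2" using \<open>0 < P\<close> \<open>P < Q\<close> by (intro power_strict_mono) auto
  moreover have "(norm m)^2 \<le> P^2" using \<open>D^2 + (norm m)^2 < P^2\<close> zero_le_power2[of D] by linarith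
  ultimately have "1 < ?h P" "?h P \<le> ?h Q"
    using D by (auto intro: rc_h_gt_one rc_h_mono)
  then have "D^2 * (?h Q * rc_T (?h Q) - ?h P * rc_T (?h P)) \<le> D^2 * (((?h Q)^2 - (?h P)^2) / 2)"
    by (intro mult_left_mono mult_rc_T_diff_le) auto
  also have "\<dots> = (Q^2 - P^2) / 2"
    using rc_h_sq[of D m P] rc_h_sq[of D m Q] D \<open>(norm m)^2 \<le> P^2\<close> \<open>P^2 < Q^2\<close>
    by (simp add: right_diff_distrib)
  also have "\<dots> < Q^2 - P^2 - (Q - P) * E"
  proof -
    have "0 < (Q - P) * ((Q + P) / 2 - E)" using \<open>E \<le> P\<close> \<open>P < Q\<close> by (intro mult_pos_pos) auto
    also have "\<dots> = (Q^2 - P^2 - (Q - P) * E) - (Q^2 - P^2) / 2"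
      by (simp add: field_simps power2_eq_square)
    finally show ?thesis by simp
  qed
  finally show "rc_S D m E P < rc_S D m E Q" unfolding rc_S_def by (simp add: algebra_simps)
qed

lemma rc_S_at_E_neg:
  fixes m :: "real ^ 'n"
  assumes "0 < D" "sqrt (D^2 + (norm m)^2) < E"
  shows "rc_S D m E E < 0"
proof -
  have "D^2 + (norm m)^2 < E^2" using sqrt_less_imp_less_power2[OF assms(2)] by simp
  then have "1 < rc_h D m E" by (rule rc_h_gt_one[OF assms(1)])
  then have "0 < D^2 * rc_h D m E * rc_T (rc_h D m E)" using assms(1) rc_T_pos by simp
  then show ?thesis unfolding rc_S_def by (simp add: power2_eq_square)
qed

lemma rc_S_lower_bound:
  fixes m :: "real ^ 'n"
  assumes "0 < D" "(norm m)^2 \<le> P^2"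
  shows "3/4 * P^2 - P * E \<le> rc_S D m E P"
proof -
  let ?h = "rc_h D m P"
  have "0 \<le> ?h" using assms by (simp add: rc_h_def)
  then have "D^2 * ?h * rc_T ?h \<le> D^2 * ?h * (?h / 4)"
    by (intro mult_left_mono rc_T_le) auto
  also have "\<dots> = (P^2 - (norm m)^2) / 4"
    using rc_h_sq[of D m P] assms by (simp add: power2_eq_square)
  also have "\<dots> \<le> P^2 / 4" by simp
  finally show ?thesis unfolding rc_S_def by simp
qed

lemma continuous_on_rc_S:
  fixes m :: "real ^ 'n"
  assumes "D \<noteq> 0"
  shows "continuous_on A (rc_S D m E)"
  unfolding rc_S_def[abs_def] rc_h_def rc_T_def using assms by (intro continuous_intros) auto

lemma rc_S_at_double_pos:
  fixes m :: "real ^ 'n"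
  assumes "0 < D" "sqrt (D^2 + (norm m)^2) < E"
  shows "0 < rc_S D m E (2*E)"
proof -
  have "0 < E" "D^2 + (norm m)^2 < E^2" using sqrt_less_imp_less_power2[OF assms(2)] by simp_all
  have "(norm m)^2 < E^2" using \<open>D^2 + (norm m)^2 < E^2\<close> zero_le_power2[of D] by linarith
  also have "\<dots> \<le> (2*E)^2" using \<open>0 < E\<close> by (intro power_mono) auto
  finally have "(norm m)^2 \<le> (2*E)^2" by (rule less_imp_le)
  then have "3/4 * (2*E)^2 - 2*E * E \<le> rc_S D m E (2*E)" by (rule rc_S_lower_bound[OF assms(1)])
  moreover have "3/4 * (2*E)^2 - 2*E * E = E^2" by (simp add: power2_eq_square)
  ultimately show ?thesis using \<open>0 < E\<close> by (metis less_le_trans zero_less_power)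
qed

theorem lemma1:
  fixes D E :: real and m :: "real ^ 'n"
  assumes "D > 0" and "E - sqrt (D^2 + (norm m)^2) > 0"
  shows "\<exists>!P. P \<in> {E<..} \<and> rc_S D m E P = 0"
proof -
  have bound: "sqrt (D^2 + (norm m)^2) < E" using assms(2) by simp
  then have "0 < E" using sqrt_less_imp_less_power2 by simp
  have at_E: "rc_S D m E E < 0" by (rule rc_S_at_E_neg[OF assms(1) bound])
  have "continuous_on {E..2*E} (rc_S D m E)" using assms(1) by (intro continuous_on_rc_S) simp
  then obtain P where P: "E \<le> P" "rc_S D m E P = 0"
    using IVT'[of "rc_S D m E" E 0 "2*E"] at_E rc_S_at_double_pos[OF assms(1) bound] \<open>0 < E\<close>
    by auto
  with at_E have root: "P \<in> {E<..} \<and> rc_S D m E P = 0" by (auto simp: le_less)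
  have mono: "strict_mono_on {E..} (rc_S D m E)" by (rule strict_mono_on_rc_S[OF assms(1) bound])
  show ?thesis
  proof (rule ex1I[of _ P])
    show "P \<in> {E<..} \<and> rc_S D m E P = 0" by (fact root)
  next
    fix Q assume "Q \<in> {E<..} \<and> rc_S D m E Q = 0"
    with root show "Q = P" using strict_mono_on_eqD[OF mono, of P Q] by auto
  qed
qed

end
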